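(* Let $\mathcal{C}$ be a unital complex algebra, $A,B\subseteq\mathcal{C}$ subalgebras with $\mathbf{1}_{\mathcal{C}}\in B$, $\rho:A\to B$ and $\psi:B\to A$ linear maps, and $\mathfrak{e}:\mathcal{C}\to\mathcal{C}$ a linear map such that $(A,B)$ is right-liberated with respect to $(\mathfrak{e},\rho,\psi)$. Then for every $\ell\ge0$ and every $x=(b_0,a_1,b_1,\dots,a_\ell,b_\ell)\in\mathcal{W}_\ell$, \[ \mathfrak{e}\big[b_0a_1b_1\cdots a_\ell b_\ell\big]=\mathcal{M}(x)\,\mathfrak{e}[\mathbf{1}]. \]
   Context: $(A,B)$ is right-liberated with respect to $(\mathfrak e,\rho,\psi)$ if $\mathfrak e$ is a $B$-bimodule map ($\mathfrak e[b_1yb_2]=b_1\mathfrak e[y]b_2$ for $b_1,b_2\in B$, $y\in\mathcal C$) and for every $n\ge1$, $a_1,\dots,a_n\in A$, $b_1,\dots,b_{n-1}\in B$: $\mathfrak e\big[(a_1-\rho(a_1))(b_1-\psi(b_1))(a_2-\rho(a_2))\cdots(b_{n-1}-\psi(b_{n-1}))(a_n-\rho(a_n))\big]=0.$ Moment function: $\mathcal W_\ell$ is the set of tuples $(b_0,a_1,b_1,\dots,a_\ell,b_\ell)$ with $a_i\in A$, $b_i\in B$ (so $\mathcal W_0=B$). For $m\ge1$ let $[m]=\{1,\dots,m\}$, $2[m]=\{2,4,\dots,2m\}$, $2[0]=\emptyset$. For $\ell\ge1$ and $S\subseteq[2\ell-1]$, let $T_0,\dots,T_m$ be the maximal runs of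 consecutive integers in $S\cup\{0,2\ell\}$ and $U_1,\dots,U_m$ the maximal runs of consecutive integers in $[2\ell-1]\setminus S$, listed so that $T_0<U_1<T_1<\dots<U_m<T_m$; $m=:\mathrm{Alt}(S)$. For $w=(b_0,a_1,\dots,a_\ell,b_\ell)$ set, for $j\in S\cup\{0,2\ell\}$, $x_j=\rho(a_{(j+1)/2})$ if $j$ odd, $x_j=b_{j/2}$ if $j$ even; and for $k\in[2\ell-1]\setminus S$, $y_k=a_{(k+1)/2}$ if $k$ odd, $y_k=\psi(b_{k/2})$ if $k$ even. Define $\mathrm{Col}(w;S)=\big(\prod_{j\in T_0}x_j,\prod_{k\in U_1}y_k,\prod_{j\in T_1}x_j,\dots,\prod_{k\in U_m}y_k,\prod_{j\in T_m}x_j\big)\in\mathcal W_{m}$, products taken in increasing order of index. Define $\mathcal M:\bigcup_\ell\mathcal W_\ell\to B$ recursively by $\mathcal M(b)=b$ for $b\in\mathcal W_0$ and, for $x\in\mathcal W_\ell$, $\ell\ge1$, $\mathcal M(x)=\sum_{S\subseteq[2\ell-1],\,S\neq 2[\ell-1]}(-1)^{\ell+|S|}\mathcal M(\mathrm{Col}(x;S))$ (each such $S$ has $\mathrm{Alt}(S)<\ell$). *)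

theory Defs
  imports Main "HOL.Complex"
begin

definition complex_algebra :: "(complex \<Rightarrow> 'c::ring_1 \<Rightarrow> 'c) \<Rightarrow> bool" where
  "complex_algebra sc \<longleftrightarrow> module sc \<and>
     (\<forall>c x y. sc c (x * y) = sc c x * y) \<and> (\<forall>c x y. sc c (x * y) = x * sc c y)"

definition subalgebra :: "(complex \<Rightarrow> 'c::ring_1 \<Rightarrow> 'c) \<Rightarrow> 'c set \<Rightarrow> bool" where
  "subalgebra sc A \<longleftrightarrow> 0 \<in> A \<and> (\<forall>x\<in>A. \<forall>y\<in>A. x + y \<in> A \<and> x * y \<in> A)
     \<and> (\<forall>c. \<forall>x\<in>A. sc c x \<in> A)"

definition linear_on :: "(complex \<Rightarrow> 'c::ring_1 \<Rightarrow> 'c) \<Rightarrow> 'c set \<Rightarrow> ('c \<Rightarrow> 'c) \<Rightarrow> bool" where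
  "linear_on sc A f \<longleftrightarrow> (\<forall>x\<in>A. \<forall>y\<in>A. f (x + y) = f x + f y) \<and> (\<forall>c. \<forall>x\<in>A. f (sc c x) = sc c (f x))"

definition right_liberated ::
  "'c::ring_1 set \<Rightarrow> 'c set \<Rightarrow> ('c \<Rightarrow> 'c) \<Rightarrow> ('c \<Rightarrow> 'c) \<Rightarrow> ('c \<Rightarrow> 'c) \<Rightarrow> bool" where
  "right_liberated A B e \<rho> \<psi> \<longleftrightarrow>
     (\<forall>b1\<in>B. \<forall>b2\<in>B. \<forall>y. e (b1 * y * b2) = b1 * e y * b2) \<and>
     (\<forall>n\<ge>1. \<forall>a b :: nat \<Rightarrow> 'c.
        (\<forall>i\<in>{1..n}. a i \<in> A) \<longrightarrow> (\<forall>i\<in>{1..n-1}. b i \<in> B) \<longrightarrow>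
        e (prod_list (map (\<lambda>j. if odd j then a ((j+1) div 2) - \<rho> (a ((j+1) div 2))
                                 else b (j div 2) - \<psi> (b (j div 2))) [1..<2*n])) = 0)"

(* Words in W_l are lists w of length 2l+1: w!(2i) = b_i, w!(2i-1) = a_i. *)

fun runs :: "('a \<Rightarrow> bool) \<Rightarrow> 'a list \<Rightarrow> 'a list list" where
  "runs P [] = []"
| "runs P (x # xs) = (case runs P xs of [] \<Rightarrow> [[x]]
     | r # rs \<Rightarrow> if P (hd r) = P x then (x # r) # rs else [x] # r # rs)"

definition Col :: "('c::ring_1 \<Rightarrow> 'c) \<Rightarrow> ('c \<Rightarrow> 'c) \<Rightarrow> 'c list \<Rightarrow> nat set \<Rightarrow> 'c list" where
  "Col \<rho> \<psi> w S =
    (let l = length w div 2; Sig = S \<union> {0, 2*l};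
         val = (\<lambda>k. if k \<in> Sig then (if odd k then \<rho> (w ! k) else w ! k)
                    else (if odd k then w ! k else \<psi> (w ! k)))
     in map (\<lambda>blk. prod_list (map val blk)) (runs (\<lambda>k. k \<in> Sig) [0..<2*l+1]))"

(* recursion with fuel; fuel length w suffices since Alt(S) < l for all admissible S *)
primrec Maux :: "nat \<Rightarrow> ('c::ring_1 \<Rightarrow> 'c) \<Rightarrow> ('c \<Rightarrow> 'c) \<Rightarrow> 'c list \<Rightarrow> 'c" where
  "Maux 0 \<rho> \<psi> w = w ! 0"
| "Maux (Suc k) \<rho> \<psi> w =
    (if length w \<le> 1 then w ! 0 else
      (let l = length w div 2 in
        \<Sum>S \<in> {S. S \<subseteq> {1..2*l-1} \<and> S \<noteq> {2*i | i. i \<in> {1..l-1}}}.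
          (-1) ^ (l + card S) * Maux k \<rho> \<psi> (Col \<rho> \<psi> w S)))"

definition moment :: "('c::ring_1 \<Rightarrow> 'c) \<Rightarrow> ('c \<Rightarrow> 'c) \<Rightarrow> 'c list \<Rightarrow> 'c" where
  "moment \<rho> \<psi> w = Maux (length w) \<rho> \<psi> w"

end

theory Submission
  imports Defs
begin

text \<open>The liberation identity for the letters of x says
  e[b0 (a1 - \<rho> a1) (b1 - \<psi> b1) \<dots> (al - \<rho> al) bl] = 0.
  Expanding the product over the subsets of inner positions where \<rho> resp. \<psi> is chosen,
  the subset that chooses nothing gives the word itself, and every other term multiplies out to
  the product of the strictly shorter alternating word Col(x;S), with sign -(-1)^(\<ell>+|S|) once the
  subsets are indexed by S = T \<triangle> 2[\<ell>-1]. Hence e[x] obeys the recursion defining \<M>(x),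
  and induction on the length of x, using e[b] = b e[1] for b \<in> B, finishes the proof.\<close>

lemma concat_runs [simp]: "concat (runs P xs) = xs"
  by (induction xs) (auto split: list.splits)

lemma runs_eq_Nil_iff [simp]: "runs P xs = [] \<longleftrightarrow> xs = []"
  by (cases xs) (auto split: list.splits)

lemma runs_nonempty: "r \<in> set (runs P xs) \<Longrightarrow> r \<noteq> []"
  by (induction xs arbitrary: r) (auto split: list.splits if_splits)

lemma hd_hd_runs: "xs \<noteq> [] \<Longrightarrow> hd (hd (runs P xs)) = hd xs"
  by (induction xs) (auto split: list.splits)

lemma last_last_runs: "xs \<noteq> [] \<Longrightarrow> last (last (runs P xs)) = last xs"
proof (induction xs)
  case (Cons x xs)
  then show ?case by (cases xs) (auto split: list.splits)
qed simp

lemma length_runs_le: "length (runs P xs) \<le> length xs"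
  by (induction xs) (auto split: list.splits)

lemma runs_eq_singletons:
  "length (runs P xs) = length xs \<Longrightarrow> runs P xs = map (\<lambda>x. [x]) xs"
proof (induction xs)
  case (Cons x xs)
  then show ?case
    using length_runs_le[of P xs] by (auto split: list.splits if_splits)
qed simp

lemma runs_nth_alternates:
  assumes "i < length (runs P xs)" and "y \<in> set (runs P xs ! i)"
  shows "P y \<longleftrightarrow> (P (hd xs) \<longleftrightarrow> even i)"
  using assms
proof (induction xs arbitrary: i)
  case (Cons x xs)
  show ?case
  proof (cases "runs P xs")
    case Nil
    then show ?thesis using Cons.prems by simp
  next
    case (Cons r rs)
    then have "xs \<noteq> []" by auto
    then have hd_xs: "hd xs = hd r"
      using hd_hd_runs[of xs P] Cons by simp
    have IH: "P y \<longleftrightarrow> (P (hd r) \<longleftrightarrow> even j)"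
      if "j < length (r # rs)" "y \<in> set ((r # rs) ! j)" for j
      using Cons.IH[of j] that Cons hd_xs by simp
    show ?thesis
    proof (cases "P (hd r) = P x")
      case True
      then show ?thesis
        using Cons.prems Cons IH[of 0] IH[of i] by (cases i) auto
    next
      case False
      then show ?thesis
        using Cons.prems Cons IH[of "i - 1"] by (cases i) auto
    qed
  qed
qed simp

lemma odd_length_runs:
  assumes "xs \<noteq> []" and "P (hd xs)" and "P (last xs)"
  shows "odd (length (runs P xs))"
proof -
  let ?rs = "runs P xs"
  have last_rs: "last ?rs = ?rs ! (length ?rs - 1)" and "last ?rs \<noteq> []"
    using assms(1) runs_nonempty[of "last ?rs" P xs] by (simp_all add: last_conv_nth)
  then have "last xs \<in> set (?rs ! (length ?rs - 1))"
    using last_last_runs[OF assms(1), of P] last_in_set by metis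
  then have "even (length ?rs - 1)"
    using runs_nth_alternates[of "length ?rs - 1" P xs] assms by simp
  then show ?thesis using assms(1) by (cases "length ?rs") auto
qed

lemma alternates_if_length_runs_eq:
  assumes "length (runs P xs) = length xs" and "k < length xs"
  shows "P (xs ! k) \<longleftrightarrow> (P (hd xs) \<longleftrightarrow> even k)"
  using runs_nth_alternates[of k P xs "xs ! k"] runs_eq_singletons[OF assms(1)] assms by simp

lemma prod_list_diff_expand:
  fixes p q :: "'a \<Rightarrow> 'b::ring_1"
  assumes "distinct xs"
  shows "prod_list (map (\<lambda>k. p k - q k) xs) =
    (\<Sum>T\<in>Pow (set xs). (-1) ^ card T * prod_list (map (\<lambda>k. if k \<in> T then q k else p k) xs))"
  using assms
proof (induction xs)
  case (Cons x xs)
  let ?X = "set xs"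
  let ?term = "\<lambda>T. (-1) ^ card T * prod_list (map (\<lambda>k. if k \<in> T then q k else p k) xs)"
  have x: "x \<notin> ?X" and fin: "\<And>T. T \<in> Pow ?X \<Longrightarrow> finite T"
    using Cons.prems finite_subset by auto
  have map_insert: "map (\<lambda>k. if k = x \<or> k \<in> T then q k else p k) xs
      = map (\<lambda>k. if k \<in> T then q k else p k) xs" for T
    using x by (auto intro: map_cong)
  have inj: "inj_on (insert x) (Pow ?X)"
    using x by (auto simp: inj_on_def)
  let ?full = "\<lambda>T. (-1) ^ card T * prod_list (map (\<lambda>k. if k \<in> T then q k else p k) (x # xs))"
  have without_x: "?full T = p x * ?term T" if "T \<in> Pow ?X" for T
    using that x by (auto simp: minus_one_power_iff)
  have with_x: "?full (insert x T) = - (q x * ?term T)" if "T \<in> Pow ?X" for T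
  proof -
    have "card (insert x T) = Suc (card T)"
      using that x fin[OF that] by (auto intro: card_insert_disjoint)
    then show ?thesis
      by (simp add: map_insert minus_one_power_iff)
  qed
  have "sum ?full (Pow (set (x # xs))) = sum ?full (Pow ?X) + sum ?full (insert x ` Pow ?X)"
    using x by (auto simp: Pow_insert intro: sum.union_disjoint)
  also have "\<dots> = (\<Sum>T\<in>Pow ?X. p x * ?term T) + (\<Sum>T\<in>Pow ?X. - (q x * ?term T))"
    unfolding sum.reindex[OF inj] comp_def
    by (intro arg_cong2[where f = "(+)"] sum.cong refl without_x with_x)
  also have "\<dots> = (p x - q x) * (\<Sum>T\<in>Pow ?X. ?term T)"
    by (simp add: sum_distrib_left sum_subtractf left_diff_distrib sum_negf)
  finally show ?case using Cons by simp
qed simp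

lemma minus_one_power_commute: "(-1::'a::ring_1) ^ n * x = x * (-1) ^ n"
  by (simp add: minus_one_power_iff)

lemma minus_one_power_card_sym_diff:
  assumes "finite S" and "finite E"
  shows "(-1::'a::ring_1) ^ card (sym_diff S E) = (-1) ^ (card S + card E)"
proof -
  have split: "card A = card (A - B) + card (A \<inter> B)" if "finite A" for A B :: "'b set"
  proof -
    have "card A = card ((A - B) \<union> (A \<inter> B))" by (rule arg_cong[of _ _ card]) blast
    also have "\<dots> = card (A - B) + card (A \<inter> B)"
      using that by (intro card_Un_disjoint) auto
    finally show ?thesis .
  qed
  have "card ((S - E) \<union> (E - S)) = card (S - E) + card (E - S)"
    using assms by (intro card_Un_disjoint) auto
  then have "card S + card E = card ((S - E) \<union> (E - S)) + 2 * card (S \<inter> E)"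
    using split[OF assms(1), of E] split[OF assms(2), of S] by (simp add: Int_commute)
  then show ?thesis by (simp add: power_add power_mult)
qed

lemma sum_Pow_reindex_sym_diff:
  assumes "E \<subseteq> X"
  shows "(\<Sum>T\<in>Pow X. f T) = (\<Sum>S\<in>Pow X. f (sym_diff S E))"
proof -
  have involution: "sym_diff (sym_diff S E) E = S" for S by auto
  show ?thesis
    by (rule sum.reindex_bij_witness[of _ "\<lambda>S. sym_diff S E" "\<lambda>S. sym_diff S E"])
      (use assms in \<open>auto simp only: involution\<close>)
qed

lemma prod_list_in_mult_closed:
  assumes "\<And>x y. x \<in> M \<Longrightarrow> y \<in> M \<Longrightarrow> x * y \<in> M" and "xs \<noteq> []" and "set xs \<subseteq> M"
  shows "prod_list xs \<in> M"
  using assms(2,3)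
proof (induction xs)
  case (Cons x xs)
  then show ?case using assms(1) by (cases xs) auto
qed simp

lemma prod_list_map_upt_ends:
  assumes "l \<ge> 1"
  shows "prod_list (map f [0..<2 * l + 1]) = f 0 * prod_list (map f [1..<2 * l]) * f (2 * l)"
proof -
  have "[0..<2 * l + 1] = 0 # [1..<2 * l] @ [2 * l]"
    using assms upt_conv_Cons[of 0 "2 * l"] by simp
  then show ?thesis by (simp add: mult.assoc)
qed

definition alternating_word :: "'a set \<Rightarrow> 'a set \<Rightarrow> nat \<Rightarrow> 'a list \<Rightarrow> bool" where
  "alternating_word A B l w \<longleftrightarrow>
     length w = 2 * l + 1 \<and> (\<forall>k < 2 * l + 1. w ! k \<in> (if even k then B else A))"

lemma alternating_word_iff:
  "alternating_word A B l w \<longleftrightarrow>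
     length w = 2 * l + 1 \<and> (\<forall>i\<le>l. w ! (2 * i) \<in> B) \<and> (\<forall>i\<in>{1..l}. w ! (2 * i - 1) \<in> A)"
proof -
  have "(\<forall>k < 2 * l + 1. w ! k \<in> (if even k then B else A)) \<longleftrightarrow>
      (\<forall>i\<le>l. w ! (2 * i) \<in> B) \<and> (\<forall>i\<in>{1..l}. w ! (2 * i - 1) \<in> A)"
  proof safe
    fix k assume B: "\<forall>i\<le>l. w ! (2 * i) \<in> B" and A: "\<forall>i\<in>{1..l}. w ! (2 * i - 1) \<in> A"
      and "k < 2 * l + 1"
    then show "w ! k \<in> (if even k then B else A)"
      using B[rule_format, of "k div 2"] A[rule_format, of "k div 2 + 1"]
      by (auto elim!: evenE oddE)
  next
    fix i assume H: "\<forall>k < 2 * l + 1. w ! k \<in> (if even k then B else A)"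
    show "i \<le> l \<Longrightarrow> w ! (2 * i) \<in> B" using H[rule_format, of "2 * i"] by simp
    show "i \<in> {1..l} \<Longrightarrow> w ! (2 * i - 1) \<in> A" using H[rule_format, of "2 * i - 1"] by auto
  qed
  then show ?thesis unfolding alternating_word_def by blast
qed

definition inner_evens :: "nat \<Rightarrow> nat set" where
  "inner_evens l = {k \<in> {1..<2 * l}. even k}"

lemma inner_evens_eq: "inner_evens l = {2 * i | i. i \<in> {1..l - 1}}"
  unfolding inner_evens_def by (auto elim!: evenE)

lemma card_inner_evens: "card (inner_evens l) = l - 1"
proof -
  have "inner_evens l = (\<lambda>i. 2 * i) ` {1..l - 1}"
    unfolding inner_evens_eq by auto
  then show ?thesis by (simp add: card_image inj_on_def)
qed

lemma prod_list_concat: "prod_list (concat xss) = prod_list (map prod_list xss)"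
  by (induction xss) auto

definition Col_letter :: "('c \<Rightarrow> 'c) \<Rightarrow> ('c \<Rightarrow> 'c) \<Rightarrow> 'c list \<Rightarrow> nat set \<Rightarrow> nat \<Rightarrow> 'c" where
  "Col_letter \<rho> \<psi> w Sig k =
     (if k \<in> Sig then (if odd k then \<rho> (w ! k) else w ! k) else (if odd k then w ! k else \<psi> (w ! k)))"

definition proj_letter :: "('c \<Rightarrow> 'c) \<Rightarrow> ('c \<Rightarrow> 'c) \<Rightarrow> 'c list \<Rightarrow> nat \<Rightarrow> 'c" where
  "proj_letter \<rho> \<psi> w k = (if odd k then \<rho> (w ! k) else \<psi> (w ! k))"

lemma Col_eq_runs:
  assumes "length w = 2 * l + 1"
  shows "Col \<rho> \<psi> w S = map (\<lambda>r. prod_list (map (Col_letter \<rho> \<psi> w (S \<union> {0, 2 * l})) r))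
                             (runs (\<lambda>k. k \<in> S \<union> {0, 2 * l}) [0..<2 * l + 1])"
  using assms by (simp add: Col_def Col_letter_def[abs_def] Let_def del: upt_Suc)

lemma prod_list_Col:
  assumes "length w = 2 * l + 1"
  shows "prod_list (Col \<rho> \<psi> w S) = prod_list (map (Col_letter \<rho> \<psi> w (S \<union> {0, 2 * l})) [0..<2 * l + 1])"
proof -
  have flatten: "prod_list (map (\<lambda>r. prod_list (map f r)) rs) = prod_list (map f (concat rs))"
    for f :: "nat \<Rightarrow> 'a" and rs
    by (simp add: map_concat prod_list_concat comp_def)
  show ?thesis
    by (simp only: Col_eq_runs[OF assms] flatten concat_runs)
qed

lemma Col_letter_mem:
  assumes "alternating_word A B l w" and "k < 2 * l + 1"
    and "\<And>x. x \<in> A \<Longrightarrow> \<rho> x \<in> B" and "\<And>x. x \<in> B \<Longrightarrow> \<psi> x \<in> A"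
  shows "Col_letter \<rho> \<psi> w Sig k \<in> (if k \<in> Sig then B else A)"
  using assms unfolding alternating_word_def Col_letter_def by (auto split: if_splits)

lemma Col_letter_inner:
  assumes "k \<in> {1..<2 * l}"
  shows "Col_letter \<rho> \<psi> w (S \<union> {0, 2 * l}) k =
    (if k \<in> sym_diff S (inner_evens l) then proj_letter \<rho> \<psi> w k else w ! k)"
  using assms unfolding Col_letter_def proj_letter_def inner_evens_def by auto

lemma prod_list_Col_inner:
  assumes "length w = 2 * l + 1" and "l \<ge> 1"
  shows "prod_list (Col \<rho> \<psi> w S) = w ! 0 *
    prod_list (map (\<lambda>k. if k \<in> sym_diff S (inner_evens l) then proj_letter \<rho> \<psi> w k else w ! k)
      [1..<2 * l]) * w ! (2 * l)"
proof -
  have inner: "map (Col_letter \<rho> \<psi> w (S \<union> {0, 2 * l})) [1..<2 * l] =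
      map (\<lambda>k. if k \<in> sym_diff S (inner_evens l) then proj_letter \<rho> \<psi> w k else w ! k) [1..<2 * l]"
    by (intro map_cong refl Col_letter_inner) simp
  have ends: "Col_letter \<rho> \<psi> w (S \<union> {0, 2 * l}) 0 = w ! 0"
    "Col_letter \<rho> \<psi> w (S \<union> {0, 2 * l}) (2 * l) = w ! (2 * l)"
    by (simp_all add: Col_letter_def)
  show ?thesis
    unfolding prod_list_Col[OF assms(1)] prod_list_map_upt_ends[OF assms(2)] ends inner ..
qed

lemma Maux_Suc_word:
  assumes "length w = 2 * l + 1" and "l \<ge> 1"
  shows "Maux (Suc k) \<rho> \<psi> w =
    (\<Sum>S \<in> Pow {1..<2 * l} - {inner_evens l}. (-1) ^ (l + card S) * Maux k \<rho> \<psi> (Col \<rho> \<psi> w S))"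
proof -
  have "{S. S \<subseteq> {1..2 * l - 1} \<and> S \<noteq> {2 * i | i. i \<in> {1..l - 1}}} = Pow {1..<2 * l} - {inner_evens l}"
  proof -
    have "{1..2 * l - 1} = {1..<2 * l}" using assms(2) by auto
    then show ?thesis unfolding inner_evens_eq[symmetric] by auto
  qed
  then show ?thesis using assms by (simp add: Let_def)
qed

lemma prod_list_Col_inner_evens:
  assumes "length w = 2 * l + 1" and "l \<ge> 1"
  shows "prod_list (Col \<rho> \<psi> w (inner_evens l)) = prod_list w"
proof -
  have "prod_list w = prod_list (map (nth w) [0..<2 * l + 1])"
    using assms(1) map_nth[of w] by simp
  then show ?thesis
    unfolding prod_list_Col_inner[OF assms] prod_list_map_upt_ends[OF assms(2)] by simp
qed

locale right_liberation = e: additive e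
  for e :: "'c::ring_1 \<Rightarrow> 'c" +
  fixes A B :: "'c set" and \<rho> \<psi> :: "'c \<Rightarrow> 'c"
  assumes mult_closed_A: "\<And>x y. x \<in> A \<Longrightarrow> y \<in> A \<Longrightarrow> x * y \<in> A"
    and mult_closed_B: "\<And>x y. x \<in> B \<Longrightarrow> y \<in> B \<Longrightarrow> x * y \<in> B"
    and one_in_B: "1 \<in> B"
    and rho_into_B: "\<And>x. x \<in> A \<Longrightarrow> \<rho> x \<in> B"
    and psi_into_A: "\<And>x. x \<in> B \<Longrightarrow> \<psi> x \<in> A"
    and liberated: "right_liberated A B e \<rho> \<psi>"
begin

lemma e_bimodule: "b1 \<in> B \<Longrightarrow> b2 \<in> B \<Longrightarrow> e (b1 * y * b2) = b1 * e y * b2"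
  using liberated unfolding right_liberated_def by blast

lemma e_left_module: "b \<in> B \<Longrightarrow> e b = b * e 1"
  using e_bimodule[OF _ one_in_B, of b 1] by simp

lemma e_liberation:
  assumes "n \<ge> 1" and "\<forall>i\<in>{1..n}. a i \<in> A" and "\<forall>i\<in>{1..n - 1}. b i \<in> B"
  shows "e (prod_list (map (\<lambda>j. if odd j then a ((j + 1) div 2) - \<rho> (a ((j + 1) div 2))
                              else b (j div 2) - \<psi> (b (j div 2))) [1..<2 * n])) = 0"
  using liberated assms unfolding right_liberated_def by blast

lemma e_minus_one_power: "e ((-1) ^ n * x) = (-1) ^ n * e x"
  by (simp add: minus_one_power_iff e.minus)

lemma e_centred_word:
  assumes w: "alternating_word A B l w" and l: "l \<ge> 1"
  shows "e (w ! 0 * prod_list (map (\<lambda>k. w ! k - proj_letter \<rho> \<psi> w k) [1..<2 * l]) * w ! (2 * l)) = 0"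
proof -
  have letters: "\<forall>i\<in>{1..l}. w ! (2 * i - 1) \<in> A" "\<forall>i\<le>l. w ! (2 * i) \<in> B"
    using w unfolding alternating_word_iff by auto
  have "map (\<lambda>j. if odd j then w ! (2 * ((j + 1) div 2) - 1) - \<rho> (w ! (2 * ((j + 1) div 2) - 1))
                 else w ! (2 * (j div 2)) - \<psi> (w ! (2 * (j div 2)))) [1..<2 * l]
      = map (\<lambda>k. w ! k - proj_letter \<rho> \<psi> w k) [1..<2 * l]"
    by (intro map_cong refl) (auto simp: proj_letter_def elim!: oddE evenE)
  then have "e (prod_list (map (\<lambda>k. w ! k - proj_letter \<rho> \<psi> w k) [1..<2 * l])) = 0"
  proof -
    have "\<forall>i\<in>{1..l - 1}. w ! (2 * i) \<in> B" using letters(2) by auto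
    from e_liberation[OF l letters(1) this] show ?thesis
      unfolding \<open>map _ _ = _\<close> .
  qed
  moreover have "w ! 0 \<in> B" "w ! (2 * l) \<in> B"
    using letters(2)[rule_format, of 0] letters(2)[rule_format, of l] by simp_all
  ultimately show ?thesis using e_bimodule by simp
qed

lemma alternating_word_Col:
  assumes w: "alternating_word A B l w" and S: "S \<subseteq> {1..<2 * l}" and S_ne: "S \<noteq> inner_evens l"
  shows "\<exists>l' < l. alternating_word A B l' (Col \<rho> \<psi> w S)"
proof -
  define Sig where "Sig = S \<union> {0, 2 * l}"
  define xs where "xs = [0..<2 * l + 1]"
  define rs where "rs = runs (\<lambda>k. k \<in> Sig) xs"
  have len_w: "length w = 2 * l + 1" using w by (simp add: alternating_word_def)
  have Col: "Col \<rho> \<psi> w S = map (\<lambda>r. prod_list (map (Col_letter \<rho> \<psi> w Sig) r)) rs"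
    unfolding Col_eq_runs[OF len_w] rs_def Sig_def xs_def ..
  have xs: "xs \<noteq> []" "hd xs = 0" "last xs = 2 * l" "0 \<in> Sig" "2 * l \<in> Sig"
    by (simp_all add: xs_def Sig_def hd_upt last_upt del: upt_Suc)
  have run_in_Sig: "k \<in> Sig \<longleftrightarrow> even i" if "i < length rs" "k \<in> set (rs ! i)" for i k
    using runs_nth_alternates[of i "\<lambda>k. k \<in> Sig" xs k] that xs unfolding rs_def by simp
  have run_bound: "k < 2 * l + 1" if "i < length rs" "k \<in> set (rs ! i)" for i k
    using that concat_runs[of "\<lambda>k. k \<in> Sig" xs] unfolding rs_def xs_def
    by (metis atLeastLessThan_iff in_set_conv_nth nth_mem set_concat set_upt UN_I)
  have "odd (length rs)"
    unfolding rs_def using odd_length_runs[of xs] xs by simp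
  then obtain l' where l': "length rs = 2 * l' + 1" by (blast elim: oddE)
  have "length rs \<noteq> length xs"
  proof
    assume "length rs = length xs"
    then have Sig_even: "k \<in> Sig \<longleftrightarrow> even k" if "k < 2 * l + 1" for k
      using alternates_if_length_runs_eq[of "\<lambda>k. k \<in> Sig" xs k] that xs unfolding rs_def xs_def
      by (simp del: upt_Suc)
    have "k \<in> S \<longleftrightarrow> even k" if "k \<in> {1..<2 * l}" for k
      using that Sig_even[of k] unfolding Sig_def by auto
    then have "S = inner_evens l"
      using S unfolding inner_evens_def by blast
    with S_ne show False ..
  qed
  then have "l' < l"
    using length_runs_le[of "\<lambda>k. k \<in> Sig" xs] l' unfolding rs_def xs_def by simp
  moreover have "Col \<rho> \<psi> w S ! i \<in> (if even i then B else A)" if "i < 2 * l' + 1" for i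
  proof -
    have i: "i < length rs" using that l' by simp
    have "Col_letter \<rho> \<psi> w Sig k \<in> (if even i then B else A)" if "k \<in> set (rs ! i)" for k
      using Col_letter_mem[of A B l w k \<rho> \<psi> Sig] w run_bound[OF i that] rho_into_B psi_into_A
        run_in_Sig[OF i that] by presburger
    then have "set (map (Col_letter \<rho> \<psi> w Sig) (rs ! i)) \<subseteq> (if even i then B else A)"
      by auto
    moreover have "rs ! i \<noteq> []"
      using runs_nonempty i unfolding rs_def by (metis nth_mem)
    moreover have "Col \<rho> \<psi> w S ! i = prod_list (map (Col_letter \<rho> \<psi> w Sig) (rs ! i))"
      using i Col by simp
    ultimately show ?thesis
      using prod_list_in_mult_closed[OF mult_closed_A] prod_list_in_mult_closed[OF mult_closed_B]
      by (cases "even i") auto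
  qed
  ultimately show ?thesis
    using l' Col unfolding alternating_word_def by auto
qed

lemma e_prod_word_recursion:
  assumes w: "alternating_word A B l w" and l: "l \<ge> 1"
  shows "e (prod_list w) =
    (\<Sum>S \<in> Pow {1..<2 * l} - {inner_evens l}. (-1) ^ (l + card S) * e (prod_list (Col \<rho> \<psi> w S)))"
proof -
  let ?X = "{1..<2 * l}" and ?E = "inner_evens l"
  let ?word = "\<lambda>T. w ! 0 * prod_list (map (\<lambda>k. if k \<in> T then proj_letter \<rho> \<psi> w k else w ! k)
                  [1..<2 * l]) * w ! (2 * l)"
  let ?term = "\<lambda>S. (-1) ^ (l + card S) * e (prod_list (Col \<rho> \<psi> w S))"
  have len_w: "length w = 2 * l + 1" using w by (simp add: alternating_word_def)
  have E: "?E \<subseteq> ?X" "?E \<in> Pow ?X" "finite ?E" by (auto simp: inner_evens_def)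
  have "0 = e (w ! 0 * prod_list (map (\<lambda>k. w ! k - proj_letter \<rho> \<psi> w k) [1..<2 * l]) * w ! (2 * l))"
    using e_centred_word[OF w l] ..
  also have "\<dots> = e (\<Sum>T\<in>Pow ?X. (-1) ^ card T * ?word T)"
    using prod_list_diff_expand[of "[1..<2 * l]" "nth w" "proj_letter \<rho> \<psi> w"]
    by (simp add: sum_distrib_left sum_distrib_right mult.assoc minus_one_power_commute)
  also have "\<dots> = (\<Sum>T\<in>Pow ?X. (-1) ^ card T * e (?word T))"
    by (simp add: e.sum e_minus_one_power)
  \<comment> \<open>T, the set of positions taking the projected letter, becomes S = T \<triangle> 2[\<ell>-1].\<close>
  also have "\<dots> = (\<Sum>S\<in>Pow ?X. (-1) ^ card (sym_diff S ?E) * e (?word (sym_diff S ?E)))"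
    by (rule sum_Pow_reindex_sym_diff[OF E(1)])
  also have "\<dots> = (\<Sum>S\<in>Pow ?X. - ?term S)"
  proof (rule sum.cong)
    fix S assume "S \<in> Pow ?X"
    then have "finite S" by (auto intro: finite_subset)
    have "(-1::'c) ^ card (sym_diff S ?E) = - ((-1) ^ (l + card S))"
    proof -
      have "l + card S = Suc (card S + card ?E)" using l by (simp add: card_inner_evens)
      then have "(-1::'c) ^ (l + card S) = - ((-1) ^ (card S + card ?E))"
        by (metis power_Suc mult_minus1)
      then show ?thesis
        by (simp add: minus_one_power_card_sym_diff[OF \<open>finite S\<close> E(3)])
    qed
    then show "(-1) ^ card (sym_diff S ?E) * e (?word (sym_diff S ?E)) = - ?term S"
      by (simp add: prod_list_Col_inner[OF len_w l])
  qed simp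
  also have "\<dots> = - ?term ?E - (\<Sum>S \<in> Pow ?X - {?E}. ?term S)"
    using sum.remove[of "Pow ?X" ?E ?term] E(2) by (simp add: sum_negf)
  finally have "0 = - ?term ?E - (\<Sum>S \<in> Pow ?X - {?E}. ?term S)" .
  moreover have "?term ?E = - e (prod_list w)"
    using l by (simp add: prod_list_Col_inner_evens[OF len_w l] card_inner_evens minus_one_power_iff)
  ultimately show ?thesis by (simp add: algebra_simps)
qed

lemma e_prod_word_Maux:
  assumes "alternating_word A B l w" and "length w \<le> k"
  shows "e (prod_list w) = Maux k \<rho> \<psi> w * e 1"
  using assms
proof (induction k arbitrary: l w)
  case 0
  then show ?case by (simp add: alternating_word_def)
next
  case (Suc k)
  have len_w: "length w = 2 * l + 1" using Suc.prems(1) by (simp add: alternating_word_def)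
  show ?case
  proof (cases "l = 0")
    case True
    then have "w ! 0 \<in> B" and "length w = 1"
      using Suc.prems(1) len_w by (auto simp: alternating_word_def)
    then show ?thesis using e_left_module by (cases w) auto
  next
    case False
    then have l: "l \<ge> 1" by simp
    have Col_IH: "Maux k \<rho> \<psi> (Col \<rho> \<psi> w S) * e 1 = e (prod_list (Col \<rho> \<psi> w S))"
      if S: "S \<in> Pow {1..<2 * l} - {inner_evens l}" for S
    proof -
      obtain l' where "l' < l" and "alternating_word A B l' (Col \<rho> \<psi> w S)"
        using alternating_word_Col[OF Suc.prems(1)] S by auto
      moreover from this have "length (Col \<rho> \<psi> w S) \<le> k"
        using Suc.prems(2) len_w by (simp add: alternating_word_def)
      ultimately show ?thesis using Suc.IH by simp
    qed
    have "Maux (Suc k) \<rho> \<psi> w * e 1 = (\<Sum>S \<in> Pow {1..<2 * l} - {inner_evens l}.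
        (-1) ^ (l + card S) * (Maux k \<rho> \<psi> (Col \<rho> \<psi> w S) * e 1))"
      unfolding Maux_Suc_word[OF len_w l] sum_distrib_right mult.assoc ..
    also have "\<dots> = e (prod_list w)"
      unfolding e_prod_word_recursion[OF Suc.prems(1) l] by (rule sum.cong[OF refl]) (simp add: Col_IH)
    finally show ?thesis ..
  qed
qed

lemma e_prod_word_moment:
  "alternating_word A B l w \<Longrightarrow> e (prod_list w) = moment \<rho> \<psi> w * e 1"
  unfolding moment_def by (rule e_prod_word_Maux) auto

end

theorem theorem2p6:
  fixes sc :: "complex \<Rightarrow> 'c::ring_1 \<Rightarrow> 'c"
    and A B :: "'c set" and \<rho> \<psi> e :: "'c \<Rightarrow> 'c"
    and l :: nat and w :: "'c list"
  assumes "complex_algebra sc"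
    and "subalgebra sc A" and "subalgebra sc B" and "1 \<in> B"
    and "\<forall>x\<in>A. \<rho> x \<in> B" and "linear_on sc A \<rho>"
    and "\<forall>x\<in>B. \<psi> x \<in> A" and "linear_on sc B \<psi>"
    and "Vector_Spaces.linear sc sc e"
    and "right_liberated A B e \<rho> \<psi>"
    and "length w = 2 * l + 1"
    and "\<forall>i\<le>l. w ! (2*i) \<in> B"
    and "\<forall>i\<in>{1..l}. w ! (2*i - 1) \<in> A"
  shows "e (prod_list w) = moment \<rho> \<psi> w * e 1"
proof -
  interpret linear: Vector_Spaces.linear sc sc e by fact
  interpret right_liberation e A B \<rho> \<psi>
    by unfold_locales (use assms linear.add in \<open>auto simp: subalgebra_def\<close>)
  show ?thesis
    using e_prod_word_moment assms(11-13) unfolding alternating_word_iff by blast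
qed

end
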